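(* Let $\Theta\in\mathbb{R}^{n\times p}$ be a matrix each of whose rows is monotone (either nondecreasing or nonincreasing). Let $\Theta'=\Theta(I_p-\frac1p ee^\top)$ have singular value decomposition $\Theta'=\sum_{i=1}^r\lambda_i u_iv_i^\top$ with $\lambda_1\ge\cdots\ge\lambda_r>0$, and assume condition (A) holds. Then the leading right singular vector $v_1=(v_{11},\dots,v_{1p})^\top$ satisfies $\sum_{j=1}^p v_{1j}=0$ and $v_{11}\le v_{12}\le\cdots\le v_{1p}$. Moreover, the signs of the components of the leading left singular vector $u_1=(u_{11},\dots,u_{1n})^\top$ indicate the direction of monotonicity of the rows: $u_{1i}\ge 0$ whenever the $i$-th row of $\Theta'$ (equivalently of $\Theta$) is nondecreasing, and $u_{1i}\le0$ whenever it is nonincreasing.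
   Context: $e=(1,\dots,1)^\top\in\mathbb{R}^p$. Condition (A): the largest singular value $\lambda_1$ of $\Theta'$ has multiplicity one, and the first nonzero component of $v_1$ is negative (this fixes the signs of the pair $(u_1,v_1)$). *)

theory Defs
  imports "HOL-Analysis.Analysis"
begin

definition ones_vec :: "real^'n" where
  "ones_vec = (\<chi> i. 1)"

definition outer :: "real^'n \<Rightarrow> real^'p \<Rightarrow> real^'p^'n" where
  "outer u v = (\<chi> i j. u $ i * v $ j)"

definition centered :: "real^'p^'n \<Rightarrow> real^'p^'n" where
  "centered A = A ** (mat 1 - (1 / real CARD('p)) *\<^sub>R outer (ones_vec :: real^'p) (ones_vec :: real^'p))"

definition row_nondecr :: "real^'p::{finite,linorder}^'n \<Rightarrow> 'n \<Rightarrow> bool" where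
  "row_nondecr A i \<longleftrightarrow> (\<forall>j k. j \<le> k \<longrightarrow> A $ i $ j \<le> A $ i $ k)"

definition row_nonincr :: "real^'p::{finite,linorder}^'n \<Rightarrow> 'n \<Rightarrow> bool" where
  "row_nonincr A i \<longleftrightarrow> (\<forall>j k. j \<le> k \<longrightarrow> A $ i $ k \<le> A $ i $ j)"

end

theory Submission
  imports Defs
begin

(* The centred matrix M has zero row sums and monotone rows. By Chebyshev's sum inequality a
   monotone zero-sum vector has nonnegative inner product with every nondecreasing vector, so
   z |-> M^T M z maps nondecreasing vectors to nondecreasing vectors. Power iteration from a
   nondecreasing x with v_1 . x ~= 0 (a signed row of M) converges in direction to (v_1 . x) v_1,
   so v_1 is monotone; as v_1 = M^T u_1 / lambda_1 and M e = 0 it has zero sum, and the sign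
   normalisation of condition (A) makes it nondecreasing. Finally u_1 = M v_1 / lambda_1, and
   Chebyshev's inequality again gives the signs of its entries. *)

lemma centered_nth:
  fixes A :: "real^'p^'n"
  shows "centered A $ i $ j = A $ i $ j - (\<Sum>l\<in>UNIV. A $ i $ l) / real CARD('p)"
  unfolding centered_def matrix_matrix_mult_def outer_def ones_vec_def mat_def
  by (simp add: right_diff_distrib sum_subtractf sum_divide_distrib if_distrib[of "\<lambda>x. _ * x"] cong: if_cong)

lemma sum_centered_row:
  fixes A :: "real^'p^'n"
  shows "(\<Sum>j\<in>UNIV. centered A $ i $ j) = 0"
  by (simp add: centered_nth sum_subtractf)

lemma mono_centered_row: "row_nondecr A i \<Longrightarrow> mono (vec_nth (centered A $ i))"
  by (simp add: mono_def row_nondecr_def centered_nth)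

lemma antimono_centered_row: "row_nonincr A i \<Longrightarrow> antimono (vec_nth (centered A $ i))"
  by (simp add: antimono_def row_nonincr_def centered_nth)

lemma Chebyshev_sum_vec:
  fixes a b :: "real^'p::{finite,linorder}"
  assumes a: "mono (vec_nth a)" and b: "mono (vec_nth b)"
  shows "(\<Sum>j\<in>UNIV. a $ j) * (\<Sum>j\<in>UNIV. b $ j) \<le> real CARD('p) * (a \<bullet> b)"
proof -
  let ?S = "\<Sum>j\<in>UNIV. \<Sum>k\<in>UNIV. (a $ j - a $ k) * (b $ j - b $ k)"
  have "?S = 2 * (real CARD('p) * (a \<bullet> b) - (\<Sum>j\<in>UNIV. a $ j) * (\<Sum>j\<in>UNIV. b $ j))"
    by (simp add: inner_vec_def algebra_simps sum_subtractf sum.distrib sum_distrib_left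
        sum_distrib_right sum.swap[of "\<lambda>j k. a $ k * b $ j"])
  moreover have "0 \<le> ?S"
  proof (intro sum_nonneg)
    fix j k :: 'p
    show "0 \<le> (a $ j - a $ k) * (b $ j - b $ k)"
      using a b by (cases "j \<le> k") (auto simp: mono_def intro: mult_nonpos_nonpos)
  qed
  ultimately show ?thesis by simp
qed

lemma inner_nonneg_mono_sum_zero:
  fixes a b :: "real^'p::{finite,linorder}"
  assumes "mono (vec_nth a)" "mono (vec_nth b)" "(\<Sum>j\<in>UNIV. a $ j) = 0"
  shows "0 \<le> a \<bullet> b"
  using Chebyshev_sum_vec[OF assms(1,2)] assms(3) by (simp add: zero_le_mult_iff)

lemma antimono_sum_zero_first_nonzero_nonneg:
  fixes y :: "real^'p::{finite,linorder}"
  assumes anti: "antimono (vec_nth y)" and sum0: "(\<Sum>k\<in>UNIV. y $ k) = 0"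
    and before: "\<forall>k<j. y $ k = 0"
  shows "0 \<le> y $ j"
proof (rule ccontr)
  assume neg: "\<not> 0 \<le> y $ j"
  have "y $ k \<le> 0" for k
    using before neg anti[THEN antimonoD, of j k] by (cases "k < j") (auto simp: not_less)
  then have "(\<Sum>k\<in>UNIV. y $ k) < 0"
    using neg sum_strict_mono_ex1[of UNIV "vec_nth y" "\<lambda>_. 0"] by (auto simp: not_le)
  with sum0 show False by simp
qed

lemma mono_vec_nth_scaleR:
  fixes y :: "real^'p::{finite,linorder}"
  shows "mono (vec_nth y) \<Longrightarrow> 0 \<le> c \<Longrightarrow> mono (vec_nth (c *\<^sub>R y))"
  by (simp add: mono_def mult_left_mono)

lemma mono_vec_nth_LIMSEQ:
  fixes f :: "nat \<Rightarrow> real^'p::{finite,linorder}"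
  assumes lim: "f \<longlonglongrightarrow> y" and mono: "\<And>m. mono (vec_nth (f m))"
  shows "mono (vec_nth y)"
proof (rule monoI)
  fix j k :: 'p
  assume "j \<le> k"
  then have "\<And>m. 0 \<le> f m $ k - f m $ j" using mono by (simp add: monoD)
  moreover have "(\<lambda>m. f m $ k - f m $ j) \<longlonglongrightarrow> y $ k - y $ j"
    using lim by (intro tendsto_intros)
  ultimately have "0 \<le> y $ k - y $ j" by (intro LIMSEQ_le_const) auto
  then show "y $ j \<le> y $ k" by simp
qed

lemma mono_gram:
  fixes M :: "real^'p::{finite,linorder}^'n"
  assumes rows: "\<forall>i. mono (vec_nth (M $ i)) \<or> antimono (vec_nth (M $ i))"
    and row_sums: "\<forall>i. (\<Sum>j\<in>UNIV. M $ i $ j) = 0"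
    and z: "mono (vec_nth z)"
  shows "mono (vec_nth ((M *v z) v* M))"
proof (rule monoI)
  fix j k :: 'p
  assume jk: "j \<le> k"
  have "(M $ i \<bullet> z) * M $ i $ j \<le> (M $ i \<bullet> z) * M $ i $ k" for i
  proof (cases "mono (vec_nth (M $ i))")
    case True
    then have "0 \<le> M $ i \<bullet> z" using row_sums z by (intro inner_nonneg_mono_sum_zero) auto
    with True jk show ?thesis by (simp add: mult_left_mono monoD)
  next
    case False
    with rows have anti: "antimono (vec_nth (M $ i))" by blast
    then have "mono (vec_nth (- M $ i))" by (simp add: mono_def antimono_def)
    then have "0 \<le> - M $ i \<bullet> z" using row_sums z by (intro inner_nonneg_mono_sum_zero) (auto simp: sum_negf)
    with anti jk show ?thesis by (simp add: mult_left_mono_neg antimonoD)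
  qed
  then show "((M *v z) v* M) $ j \<le> ((M *v z) v* M) $ k"
    by (simp add: vector_matrix_mult_def matrix_vector_mul_component sum_mono)
qed

lemma inner_sum_orthonormal:
  fixes w :: "'i \<Rightarrow> 'v::real_inner"
  assumes "finite K" and orth: "\<forall>k\<in>K. \<forall>l\<in>K. w k \<bullet> w l = (if k = l then 1 else 0)" and "k \<in> K"
  shows "w k \<bullet> (\<Sum>l\<in>K. c l *\<^sub>R w l) = c k"
proof -
  have "w k \<bullet> (\<Sum>l\<in>K. c l *\<^sub>R w l) = (\<Sum>l\<in>K. if l = k then c l else 0)"
    using orth \<open>k \<in> K\<close> by (auto simp: inner_sum_right intro: sum.cong)
  then show ?thesis using assms by simp
qed

locale svd_expansion =
  fixes M :: "real^'p^'n" and K :: "nat set" and lam :: "nat \<Rightarrow> real"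
    and u :: "nat \<Rightarrow> real^'n" and v :: "nat \<Rightarrow> real^'p"
  assumes finite_K: "finite K"
    and expansion: "M = (\<Sum>k\<in>K. lam k *\<^sub>R outer (u k) (v k))"
    and orthonormal_u: "\<forall>k\<in>K. \<forall>l\<in>K. u k \<bullet> u l = (if k = l then 1 else 0)"
    and orthonormal_v: "\<forall>k\<in>K. \<forall>l\<in>K. v k \<bullet> v l = (if k = l then 1 else 0)"
begin

lemma matrix_vector_mult_expansion: "M *v z = (\<Sum>k\<in>K. (lam k * (v k \<bullet> z)) *\<^sub>R u k)"
  by (simp add: expansion outer_def vec_eq_iff matrix_vector_mult_def inner_vec_def
      sum_distrib_left sum_distrib_right sum.swap[of _ UNIV] mult_ac)

lemma vector_matrix_mult_expansion: "w v* M = (\<Sum>k\<in>K. (lam k * (u k \<bullet> w)) *\<^sub>R v k)"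
  by (simp add: expansion outer_def vec_eq_iff vector_matrix_mult_def inner_vec_def
      sum_distrib_left sum_distrib_right sum.swap[of _ UNIV] mult_ac)

lemma matrix_vector_mult_singular:
  assumes "l \<in> K" shows "M *v v l = lam l *\<^sub>R u l"
proof -
  have "M *v v l = (\<Sum>k\<in>K. if k = l then lam k *\<^sub>R u k else 0)"
    using orthonormal_v assms by (auto simp: matrix_vector_mult_expansion intro!: sum.cong)
  then show ?thesis using finite_K assms by simp
qed

lemma vector_matrix_mult_singular:
  assumes "l \<in> K" shows "u l v* M = lam l *\<^sub>R v l"
proof -
  have "u l v* M = (\<Sum>k\<in>K. if k = l then lam k *\<^sub>R v k else 0)"
    using orthonormal_u assms by (auto simp: vector_matrix_mult_expansion intro!: sum.cong)
  then show ?thesis using finite_K assms by simp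
qed

lemma gram_expansion: "(M *v z) v* M = (\<Sum>k\<in>K. (lam k ^ 2 * (v k \<bullet> z)) *\<^sub>R v k)"
proof -
  have "u k \<bullet> (M *v z) = lam k * (v k \<bullet> z)" if "k \<in> K" for k
    using inner_sum_orthonormal[OF finite_K orthonormal_u that] by (simp add: matrix_vector_mult_expansion)
  then show ?thesis
    by (auto simp: vector_matrix_mult_expansion power2_eq_square mult_ac intro!: sum.cong)
qed

lemma gram_power:
  "((\<lambda>z. (M *v z) v* M) ^^ Suc m) z = (\<Sum>k\<in>K. (lam k ^ (2 * Suc m) * (v k \<bullet> z)) *\<^sub>R v k)"
proof (induction m)
  case 0
  then show ?case by (simp add: gram_expansion)
next
  case (Suc m)
  let ?y = "((\<lambda>z. (M *v z) v* M) ^^ Suc m) z"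
  have "v k \<bullet> ?y = lam k ^ (2 * Suc m) * (v k \<bullet> z)" if "k \<in> K" for k
    unfolding Suc.IH by (rule inner_sum_orthonormal[OF finite_K orthonormal_v that])
  then have "(M *v ?y) v* M = (\<Sum>k\<in>K. (lam k ^ (2 * Suc (Suc m)) * (v k \<bullet> z)) *\<^sub>R v k)"
    by (auto simp: gram_expansion power_add[symmetric] mult_ac intro!: sum.cong)
  moreover have "((\<lambda>z. (M *v z) v* M) ^^ Suc (Suc m)) z = (M *v ?y) v* M"
    by (simp only: funpow.simps(2) o_apply)
  ultimately show ?case by simp
qed

lemma gram_power_tendsto:
  assumes d: "d \<in> K" and lam_d: "lam d \<noteq> 0" and dominant: "\<forall>l\<in>K - {d}. \<bar>lam l\<bar> < \<bar>lam d\<bar>"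
  shows "(\<lambda>m. (1 / lam d ^ (2 * Suc m)) *\<^sub>R ((\<lambda>z. (M *v z) v* M) ^^ Suc m) z)
           \<longlonglongrightarrow> (v d \<bullet> z) *\<^sub>R v d"
proof -
  have ratio_power: "(\<lambda>m. (lam l / lam d) ^ (2 * Suc m)) \<longlonglongrightarrow> (if l = d then 1 else 0)"
    if "l \<in> K" for l
  proof (cases "l = d")
    case False
    with dominant that lam_d have "norm (lam l / lam d) < 1" by (simp add: divide_less_eq)
    then have "((\<lambda>n. (lam l / lam d) ^ n) \<circ> (\<lambda>m. 2 * Suc m)) \<longlonglongrightarrow> 0"
      by (intro LIMSEQ_subseq_LIMSEQ LIMSEQ_power_zero) (auto intro: strict_monoI)
    with False show ?thesis by (simp add: o_def)
  qed (simp add: lam_d)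
  have "(\<lambda>m. \<Sum>l\<in>K. ((lam l / lam d) ^ (2 * Suc m) * (v l \<bullet> z)) *\<^sub>R v l)
          \<longlonglongrightarrow> (\<Sum>l\<in>K. ((if l = d then 1 else 0) * (v l \<bullet> z)) *\<^sub>R v l)"
    by (intro tendsto_sum tendsto_scaleR tendsto_mult ratio_power tendsto_const)
  moreover have "(\<Sum>l\<in>K. ((if l = d then 1 else 0) * (v l \<bullet> z)) *\<^sub>R v l) = (v d \<bullet> z) *\<^sub>R v d"
    using finite_K d
    by (subst sum.cong[OF refl, of _ _ "\<lambda>l. if l = d then (v l \<bullet> z) *\<^sub>R v l else 0"]) auto
  moreover have "(1 / lam d ^ (2 * Suc m)) *\<^sub>R ((\<lambda>z. (M *v z) v* M) ^^ Suc m) z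
      = (\<Sum>l\<in>K. ((lam l / lam d) ^ (2 * Suc m) * (v l \<bullet> z)) *\<^sub>R v l)" for m
    unfolding gram_power by (simp add: scaleR_sum_right power_divide)
  ultimately show ?thesis by simp
qed

lemma sum_right_singular_eq_0:
  assumes "l \<in> K" and "lam l \<noteq> 0" and row_sums: "\<forall>i. (\<Sum>j\<in>UNIV. M $ i $ j) = 0"
  shows "(\<Sum>j\<in>UNIV. v l $ j) = 0"
proof -
  have "M *v ones_vec = 0"
    using row_sums by (simp add: vec_eq_iff matrix_vector_mult_def ones_vec_def)
  then have "(u l v* M) \<bullet> ones_vec = 0" by (simp add: dot_lmul_matrix)
  then have "lam l * (\<Sum>j\<in>UNIV. v l $ j) = 0"
    using assms(1) by (simp add: vector_matrix_mult_singular inner_vec_def ones_vec_def sum_distrib_left)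
  with assms(2) show ?thesis by simp
qed

end

lemma dominant_right_singular_monotone:
  fixes M :: "real^'p::{finite,linorder}^'n"
  assumes "svd_expansion M K lam u v"
    and rows: "\<forall>i. mono (vec_nth (M $ i)) \<or> antimono (vec_nth (M $ i))"
    and row_sums: "\<forall>i. (\<Sum>j\<in>UNIV. M $ i $ j) = 0"
    and d: "d \<in> K" and lam_d: "lam d \<noteq> 0"
    and dominant: "\<forall>l\<in>K - {d}. \<bar>lam l\<bar> < \<bar>lam d\<bar>"
  shows "mono (vec_nth (v d)) \<or> antimono (vec_nth (v d))"
proof -
  interpret svd_expansion M K lam u v by fact
  let ?S = "\<lambda>z. (M *v z) v* M"
  have "u d \<bullet> u d = 1" using orthonormal_u d by simp
  then have "u d \<noteq> 0" by auto
  then have "M *v v d \<noteq> 0" using lam_d d by (simp add: matrix_vector_mult_singular)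
  then obtain i where i: "M $ i \<bullet> v d \<noteq> 0" by (auto simp: vec_eq_iff matrix_vector_mul_component)
  obtain x where x_mono: "mono (vec_nth x)" and x_v: "v d \<bullet> x \<noteq> 0"
  proof (cases "mono (vec_nth (M $ i))")
    case True
    with i show ?thesis by (intro that[of "M $ i"]) (simp_all add: inner_commute)
  next
    case False
    with rows have "mono (vec_nth (- M $ i))" by (auto simp: mono_def antimono_def)
    with i show ?thesis by (intro that[of "- M $ i"]) (simp_all add: inner_commute)
  qed
  have "mono (vec_nth ((?S ^^ m) x))" for m
    by (induction m) (simp_all add: x_mono mono_gram[OF rows row_sums])
  moreover have "0 \<le> 1 / lam d ^ (2 * Suc m)" for m
    by (metis zero_le_even_power even_mult_iff even_numeral zero_le_divide_1_iff)
  ultimately have "mono (vec_nth ((1 / lam d ^ (2 * Suc m)) *\<^sub>R (?S ^^ Suc m) x))" for m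
    by (rule mono_vec_nth_scaleR)
  then have "mono (vec_nth ((v d \<bullet> x) *\<^sub>R v d))"
    by (rule mono_vec_nth_LIMSEQ[OF gram_power_tendsto[OF d lam_d dominant]])
  with x_v show ?thesis
    by (cases "v d \<bullet> x > 0") (auto simp: mono_def antimono_def mult_le_cancel_left)
qed

lemma left_singular_sign:
  fixes M :: "real^'p::{finite,linorder}^'n"
  assumes "svd_expansion M K lam u v" and d: "d \<in> K" and lam_d: "0 < lam d"
    and v_mono: "mono (vec_nth (v d))" and row_sum: "(\<Sum>j\<in>UNIV. M $ i $ j) = 0"
  shows "mono (vec_nth (M $ i)) \<Longrightarrow> 0 \<le> u d $ i"
    and "antimono (vec_nth (M $ i)) \<Longrightarrow> u d $ i \<le> 0"
proof -
  interpret svd_expansion M K lam u v by fact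
  have "lam d * u d $ i = (M *v v d) $ i"
    using matrix_vector_mult_singular[OF d] by simp
  with lam_d have u_eq: "u d $ i = (M $ i \<bullet> v d) / lam d"
    by (simp add: matrix_vector_mul_component field_simps)
  show "0 \<le> u d $ i" if "mono (vec_nth (M $ i))"
    unfolding u_eq using inner_nonneg_mono_sum_zero[OF that v_mono row_sum] lam_d by simp
  show "u d $ i \<le> 0" if "antimono (vec_nth (M $ i))"
  proof -
    have "mono (vec_nth (- M $ i))"
      using that by (simp add: mono_def antimono_def)
    then have "0 \<le> - M $ i \<bullet> v d"
      using v_mono by (rule inner_nonneg_mono_sum_zero) (simp add: row_sum sum_negf)
    with lam_d show ?thesis unfolding u_eq by (simp add: divide_nonpos_pos)
  qed
qed

theorem proposition1:
  fixes Th :: "real^'p::{finite,linorder}^'n"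
    and r :: nat and lam :: "nat \<Rightarrow> real"
    and u :: "nat \<Rightarrow> real^'n" and v :: "nat \<Rightarrow> real^'p::{finite,linorder}"
  assumes mono_rows: "\<forall>i. row_nondecr Th i \<or> row_nonincr Th i"
    and r_pos: "1 \<le> r"
    and svd: "centered Th = (\<Sum>k\<in>{1..r}. lam k *\<^sub>R outer (u k) (v k))"
    and u_orth: "\<forall>k\<in>{1..r}. \<forall>l\<in>{1..r}. u k \<bullet> u l = (if k = l then 1 else 0)"
    and v_orth: "\<forall>k\<in>{1..r}. \<forall>l\<in>{1..r}. v k \<bullet> v l = (if k = l then 1 else 0)"
    and lam_decr: "\<forall>k l. 1 \<le> k \<longrightarrow> k \<le> l \<longrightarrow> l \<le> r \<longrightarrow> lam l \<le> lam k"
    and lam_pos: "lam r > 0"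
    and condA_mult: "r \<ge> 2 \<longrightarrow> lam 2 < lam 1"
    and condA_sign: "\<exists>j. v 1 $ j < 0 \<and> (\<forall>k<j. v 1 $ k = 0)"
  shows "(\<Sum>j\<in>UNIV. v 1 $ j) = 0
         \<and> (\<forall>j k. j \<le> k \<longrightarrow> v 1 $ j \<le> v 1 $ k)
         \<and> (\<forall>i. row_nondecr Th i \<longrightarrow> u 1 $ i \<ge> 0)
         \<and> (\<forall>i. row_nonincr Th i \<longrightarrow> u 1 $ i \<le> 0)"
proof -
  let ?M = "centered Th"
  have svd_M: "svd_expansion ?M {1..r} lam u v"
    using svd u_orth v_orth by unfold_locales simp_all
  have one: "1 \<in> {1..r}" using r_pos by simp
  have lam_1: "0 < lam 1" using lam_decr[rule_format, of 1 r] lam_pos r_pos by simp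
  have dominant: "\<forall>l\<in>{1..r} - {1}. \<bar>lam l\<bar> < \<bar>lam 1\<bar>"
  proof
    fix l assume l: "l \<in> {1..r} - {1}"
    then have "0 < lam l" and "lam l \<le> lam 2"
      using lam_decr[rule_format, of l r] lam_decr[rule_format, of 2 l] lam_pos by auto
    with l condA_mult show "\<bar>lam l\<bar> < \<bar>lam 1\<bar>" by auto
  qed
  have rows: "\<forall>i. mono (vec_nth (?M $ i)) \<or> antimono (vec_nth (?M $ i))"
    using mono_rows mono_centered_row antimono_centered_row by blast
  have row_sums: "\<forall>i. (\<Sum>j\<in>UNIV. ?M $ i $ j) = 0" by (simp add: sum_centered_row)
  have sum_v: "(\<Sum>j\<in>UNIV. v 1 $ j) = 0"
    using svd_expansion.sum_right_singular_eq_0[OF svd_M one] lam_1 row_sums by simp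
  obtain j where j: "v 1 $ j < 0" "\<forall>k<j. v 1 $ k = 0" using condA_sign by blast
  then have "\<not> antimono (vec_nth (v 1))"
    using antimono_sum_zero_first_nonzero_nonneg[OF _ sum_v j(2)] j(1) by auto
  then have mono_v: "mono (vec_nth (v 1))"
    using dominant_right_singular_monotone[OF svd_M rows row_sums one] lam_1 dominant by auto
  have "\<forall>i. row_nondecr Th i \<longrightarrow> 0 \<le> u 1 $ i"
    using left_singular_sign(1)[OF svd_M one lam_1 mono_v sum_centered_row] mono_centered_row
    by blast
  moreover have "\<forall>i. row_nonincr Th i \<longrightarrow> u 1 $ i \<le> 0"
    using left_singular_sign(2)[OF svd_M one lam_1 mono_v sum_centered_row] antimono_centered_row
    by blast
  ultimately show ?thesis using sum_v mono_v by (simp add: mono_def)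
qed

end
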